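(* Let $p,m$ be integers with $m\ge1$ and $0\le p\le[\frac m2]$, and let $c_j=c_j(p,m)$. Then $\frac{2c_1}{m-1}+\frac{c_2}{2}+c_3>0$ in each of the following cases: ($p=0$, $m\ge2$); ($p=1$, $m\ge3$); ($p\ge2$, $m\ge17$); ($p<\frac m2$, $5\le m\le16$).
   Context: With $\binom ab=0$ for $b<0$: $c_1=\frac1{180}\binom mp-\frac1{12}\binom{m-2}{p-1}+\frac12\binom{m-4}{p-2}$, $c_2=-\frac1{180}\binom mp+\frac12\binom{m-2}{p-1}-2\binom{m-4}{p-2}$, $c_3=\frac1{72}\binom mp-\frac16\binom{m-2}{p-1}+\frac12\binom{m-4}{p-2}$. *)

theory Defs
  imports Complex_Main
begin

definition binom :: "int \<Rightarrow> int \<Rightarrow> real" where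
  "binom a b = (if b < 0 then 0 else (real_of_int a) gchoose (nat b))"

definition c1 :: "int \<Rightarrow> int \<Rightarrow> real" where
  "c1 p m = binom m p / 180 - binom (m - 2) (p - 1) / 12 + binom (m - 4) (p - 2) / 2"

definition c2 :: "int \<Rightarrow> int \<Rightarrow> real" where
  "c2 p m = - binom m p / 180 + binom (m - 2) (p - 1) / 2 - 2 * binom (m - 4) (p - 2)"

definition c3 :: "int \<Rightarrow> int \<Rightarrow> real" where
  "c3 p m = binom m p / 72 - binom (m - 2) (p - 1) / 6 + binom (m - 4) (p - 2) / 2"

end

theory Submission
  imports Defs
begin

text \<open>Write \<open>a, b, c\<close> for the three binomial coefficients and \<open>X = p (m - p)\<close>. Absorption
  gives \<open>m (m - 1) b = X a\<close> and \<open>(m - 2) (m - 3) c = (X - m + 1) b\<close>, so after clearing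
  denominators the expression is a positive multiple of \<open>a\<close> times a polynomial that is quadratic
  in \<open>X\<close>. For \<open>m \<ge> 17\<close> this polynomial is positive on the whole range \<open>0 \<le> X \<le> m\<^sup>2 / 4\<close>;
  for smaller \<open>m\<close> the finitely many cases are checked directly. The case \<open>p = 0\<close>, where the
  multiplier may vanish, is a direct computation.\<close>

lemma gbinomial_absorb_twice:
  fixes a :: "'a::field_char_0"
  shows "a * (a - 1) * ((a - 2) gchoose k) = of_nat (Suc k) * (a - of_nat (Suc k)) * (a gchoose Suc k)"
proof -
  have "(a - 1) * ((a - 2) gchoose k) = of_nat (Suc k) * ((a - 1) gchoose Suc k)"
    using gbinomial_absorption[of k "a - 1"] by (simp only: diff_diff_eq one_add_one)
  then have "a * (a - 1) * ((a - 2) gchoose k) = a * (of_nat (Suc k) * ((a - 1) gchoose Suc k))"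
    by (simp only: mult.assoc)
  also have "\<dots> = of_nat (Suc k) * (a * ((a - 1) gchoose Suc k))"
    by (simp add: algebra_simps)
  also have "\<dots> = of_nat (Suc k) * (a - of_nat (Suc k)) * (a gchoose Suc k)"
    by (simp only: gbinomial_absorb_comp mult.assoc)
  finally show ?thesis .
qed

lemma binom_absorb_twice:
  "real_of_int m * (real_of_int m - 1) * binom (m - 2) (p - 1) = real_of_int (p * (m - p)) * binom m p"
proof (cases "p \<le> 0")
  case True
  then show ?thesis by (cases "p = 0") (simp_all add: binom_def)
next
  case False
  define k where "k = nat (p - 1)"
  have p: "p = int (Suc k)" using False by (simp add: k_def)
  have "nat (p - 1) = k" "nat p = Suc k" using p by simp_all
  then show ?thesis
    using gbinomial_absorb_twice[of "real_of_int m" k] p by (simp add: binom_def algebra_simps)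
qed

lemma binom_pos:
  assumes "0 \<le> p" "p \<le> m"
  shows "binom m p > 0"
proof -
  have "real_of_int m = real (nat m)" using assms by simp
  then have "binom m p = real (nat m choose nat p)"
    using assms by (simp add: binom_def binomial_gbinomial)
  then show ?thesis using assms by simp
qed

lemma c_combination_scaled:
  assumes "m \<noteq> 1"
  shows "180 * (real_of_int m - 1) * (2 * c1 p m / (real_of_int m - 1) + c2 p m / 2 + c3 p m)
    = 2 * m * binom m p + 15 * (m - 3) * binom (m - 2) (p - 1) - 90 * (m - 3) * binom (m - 4) (p - 2)"
proof -
  have "real_of_int m - 1 \<noteq> 0" using assms by simp
  then show ?thesis by (simp add: c1_def c2_def c3_def field_simps)
qed

definition reduced_poly :: "real \<Rightarrow> real \<Rightarrow> real" where
  "reduced_poly M X = 2 * M^2 * (M - 1) * (M - 2) + 15 * (M - 2) * (M - 3) * X - 90 * X * (X - M + 1)"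

lemma reduced_poly_eq:
  fixes M X a b c :: real
  assumes ab: "M * (M - 1) * b = X * a" and bc: "(M - 2) * (M - 3) * c = (X - M + 1) * b"
  shows "M * (M - 1) * (M - 2) * (2 * M * a + 15 * (M - 3) * b - 90 * (M - 3) * c) = a * reduced_poly M X"
proof -
  have "M * (M - 1) * (M - 2) * (2 * M * a + 15 * (M - 3) * b - 90 * (M - 3) * c)
      = 2 * M^2 * (M - 1) * (M - 2) * a + 15 * (M - 2) * (M - 3) * (M * (M - 1) * b)
        - 90 * M * (M - 1) * ((M - 2) * (M - 3) * c)"
    by (simp add: algebra_simps power2_eq_square)
  also have "\<dots> = 2 * M^2 * (M - 1) * (M - 2) * a + 15 * (M - 2) * (M - 3) * (M * (M - 1) * b)
        - 90 * M * (M - 1) * ((X - M + 1) * b)"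
    by (simp only: bc)
  also have "\<dots> = 2 * M^2 * (M - 1) * (M - 2) * a + 15 * (M - 2) * (M - 3) * (M * (M - 1) * b)
        - 90 * (X - M + 1) * (M * (M - 1) * b)"
    by (simp add: algebra_simps)
  also have "\<dots> = 2 * M^2 * (M - 1) * (M - 2) * a + 15 * (M - 2) * (M - 3) * (X * a)
        - 90 * (X - M + 1) * (X * a)"
    by (simp only: ab)
  also have "\<dots> = a * reduced_poly M X"
    by (simp add: reduced_poly_def algebra_simps)
  finally show ?thesis .
qed

lemma c_combination_eq:
  assumes "m \<noteq> 1"
  shows "180 * real_of_int m * (real_of_int m - 1)^2 * (real_of_int m - 2)
      * (2 * c1 p m / (real_of_int m - 1) + c2 p m / 2 + c3 p m)
    = binom m p * reduced_poly m (p * (m - p))"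
proof -
  have ab: "real_of_int m * (real_of_int m - 1) * binom (m - 2) (p - 1) = real_of_int (p * (m - p)) * binom m p"
    by (rule binom_absorb_twice)
  have "real_of_int (m - 2) * (real_of_int (m - 2) - 1) * binom (m - 2 - 2) (p - 1 - 1)
      = real_of_int ((p - 1) * (m - 2 - (p - 1))) * binom (m - 2) (p - 1)"
    by (rule binom_absorb_twice)
  then have bc: "(real_of_int m - 2) * (real_of_int m - 3) * binom (m - 4) (p - 2)
      = (real_of_int (p * (m - p)) - real_of_int m + 1) * binom (m - 2) (p - 1)"
    by (simp add: algebra_simps)
  define E where "E = 2 * c1 p m / (real_of_int m - 1) + c2 p m / 2 + c3 p m"
  have "180 * real_of_int m * (real_of_int m - 1)^2 * (real_of_int m - 2) * E
      = real_of_int m * (real_of_int m - 1) * (real_of_int m - 2) * (180 * (real_of_int m - 1) * E)"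
    by (simp add: power2_eq_square algebra_simps)
  also have "\<dots> = binom m p * reduced_poly m (p * (m - p))"
    unfolding E_def c_combination_scaled[OF assms] by (rule reduced_poly_eq[OF ab bc])
  finally show ?thesis unfolding E_def .
qed

lemma reduced_poly_pos_large:
  fixes M X :: real
  assumes "M \<ge> 17" "0 \<le> X" "4 * X \<le> M^2"
  shows "reduced_poly M X > 0"
proof -
  txt \<open>\<open>reduced_poly M X = 2 M\<^sup>2 (M - 1) (M - 2) - 15/2 M (M - 2) X + 90 X (M\<^sup>2/4 - X)\<close>\<close>
  have "X * (M^2 / 4 - X) \<ge> 0" using assms by simp
  moreover have "M * (M - 2) * X \<le> M * (M - 2) * (M^2 / 4)"
    using assms by (intro mult_left_mono) auto
  ultimately have "2 * M^2 * (M - 1) * (M - 2) - 15 / 2 * (M * (M - 2) * (M^2 / 4)) \<le> reduced_poly M X"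
    unfolding reduced_poly_def by (simp add: algebra_simps power2_eq_square)
  moreover have "2 * M^2 * (M - 1) * (M - 2) - 15 / 2 * (M * (M - 2) * (M^2 / 4)) = M^2 * (M - 2) * (M - 16) / 8"
    by (simp add: algebra_simps power2_eq_square)
  moreover have "M^2 * (M - 2) * (M - 16) / 8 > 0" using assms by simp
  ultimately show ?thesis by linarith
qed

lemma reduced_poly_pos_small:
  fixes p m :: int
  assumes "3 \<le> m" "m \<le> 16" "1 \<le> p" "2 * p < m"
  shows "reduced_poly m (p * (m - p)) > 0"
proof -
  have "m = 3 \<or> m = 4 \<or> m = 5 \<or> m = 6 \<or> m = 7 \<or> m = 8 \<or> m = 9 \<or> m = 10
      \<or> m = 11 \<or> m = 12 \<or> m = 13 \<or> m = 14 \<or> m = 15 \<or> m = 16"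
    using assms by presburger
  moreover have "p = 1 \<or> p = 2 \<or> p = 3 \<or> p = 4 \<or> p = 5 \<or> p = 6 \<or> p = 7"
    using assms by presburger
  ultimately show ?thesis using assms by (elim disjE) (simp_all add: reduced_poly_def)
qed

lemma reduced_poly_pos:
  fixes p m :: int
  assumes "1 \<le> p" "2 * p \<le> m" "m \<ge> 17 \<or> (3 \<le> m \<and> m \<le> 16 \<and> 2 * p < m)"
  shows "reduced_poly m (p * (m - p)) > 0"
proof (cases "m \<ge> 17")
  case True
  have "0 \<le> p * (m - p)" using assms by simp
  then have "0 \<le> real_of_int (p * (m - p))" by (simp only: of_int_0_le_iff)
  moreover have "4 * real_of_int (p * (m - p)) \<le> (real_of_int m)^2"
    using zero_le_power2[of "real_of_int m - 2 * real_of_int p"] by (simp add: power2_eq_square algebra_simps)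
  ultimately show ?thesis using True by (intro reduced_poly_pos_large) simp_all
next
  case False
  then show ?thesis using assms by (intro reduced_poly_pos_small) auto
qed

theorem lemma5p4:
  fixes p m :: int
  assumes "m \<ge> 1" and "0 \<le> p" and "p \<le> m div 2"
    and "(p = 0 \<and> m \<ge> 2) \<or> (p = 1 \<and> m \<ge> 3) \<or> (p \<ge> 2 \<and> m \<ge> 17)
         \<or> (2 * p < m \<and> 5 \<le> m \<and> m \<le> 16)"
  shows "2 * c1 p m / (real_of_int m - 1) + c2 p m / 2 + c3 p m > 0"
proof (cases "p = 0")
  case True
  then have "m \<ge> 2" using assms by auto
  then show ?thesis using True by (simp add: c1_def c2_def c3_def binom_def field_simps)
next
  case False
  then have "1 \<le> p" "2 * p \<le> m" and m: "m \<ge> 3"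
    and "m \<ge> 17 \<or> (3 \<le> m \<and> m \<le> 16 \<and> 2 * p < m)"
    using assms by auto
  then have "binom m p * reduced_poly m (p * (m - p)) > 0"
    using binom_pos reduced_poly_pos by simp
  then have "180 * real_of_int m * (real_of_int m - 1)^2 * (real_of_int m - 2)
      * (2 * c1 p m / (real_of_int m - 1) + c2 p m / 2 + c3 p m) > 0"
    using m by (simp only: c_combination_eq)
  moreover have "180 * real_of_int m * (real_of_int m - 1)^2 * (real_of_int m - 2) > 0"
    using m by simp
  ultimately show ?thesis by (rule zero_less_mult_pos)
qed

end
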